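(* Let $q\in\mathbb{N}\setminus\{1\}$ and let $X$ be the geometric armadillo tail with parameter $r=\frac1q$. Then there exists a saddle connection, called $\mathrm{bsc}_2'$, namely the straight-line trajectory of slope $\frac{q}{2q-1}$ starting at the singular point $(1+\frac1q,0)$ (the lower right vertex of $\square_2$): this trajectory reaches the singularity again after finite length without passing through it in between.
   Context: Set $l_k=q^{-(k-1)}$, $s_k=l_1+\dots+l_k$ ($s_0=0$), and $\square_k=[s_{k-1},s_k]\times[0,l_k]\subset\mathbb{R}^2$. The geometric armadillo tail with parameter $\frac1q$ is obtained from $P=\bigcup_k\square_k$ by gluing the top edge of each $\square_k$ to its bottom edge by vertical translation, and for each $k\ge1$ gluing $\{s_k\}\times[l_{k+1},l_k]$ by horizontal translation to $\{0\}\times[l_{k+1},l_k]$; then taking the metric completion, in which all vertices of $P$ become a single wild singularity. Trajectories and slopes are computed in the polygonal representation $P$ with these gluings. A saddle connection is a closed straight-line segment from the singularity to itself with no singular point in its interior. *)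

theory Defs
  imports "HOL-Analysis.Analysis"
begin

text \<open>Geometric armadillo tail with parameter 1/q, polygonal representation P in R^2
  (points are pairs (x,y)).  Indices k start at 1.\<close>

definition ell :: "nat \<Rightarrow> nat \<Rightarrow> real" where
  "ell q k = 1 / (real q) ^ (k - 1)"

definition spos :: "nat \<Rightarrow> nat \<Rightarrow> real" where
  "spos q k = (\<Sum>i\<in>{1..k}. ell q i)"

definition square :: "nat \<Rightarrow> nat \<Rightarrow> (real \<times> real) set" where
  "square q k = {spos q (k - 1) .. spos q k} \<times> {0 .. ell q k}"

definition polyP :: "nat \<Rightarrow> (real \<times> real) set" where
  "polyP q = (\<Union>k\<in>{1..}. square q k)"

text \<open>Vertices of P; all of them are the (single) singular point of the surface.\<close>
definition vertices :: "nat \<Rightarrow> (real \<times> real) set" where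
  "vertices q = (\<Union>k\<in>{1..}.
     {(spos q (k - 1), 0), (spos q k, 0), (spos q (k - 1), ell q k), (spos q k, ell q k),
      (spos q k, ell q (Suc k)), (0, ell q k)})"

text \<open>Edge gluings (on non-vertex edge points): top/bottom of each square by vertical
  translation, and the right edge piece {s_k} x (l_(k+1), l_k) with {0} x (l_(k+1), l_k)
  by horizontal translation.  glued q a b: the point a of the boundary is identified with b.\<close>
definition glued :: "nat \<Rightarrow> real \<times> real \<Rightarrow> real \<times> real \<Rightarrow> bool" where
  "glued q a b \<longleftrightarrow> (\<exists>k\<ge>1.
     (snd a = ell q k \<and> spos q (k - 1) < fst a \<and> fst a < spos q k \<and> b = (fst a, 0)) \<or>
     (snd a = 0 \<and> spos q (k - 1) < fst a \<and> fst a < spos q k \<and> b = (fst a, ell q k)) \<or>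
     (fst a = spos q k \<and> ell q (Suc k) < snd a \<and> snd a < ell q k \<and> b = (0, snd a)) \<or>
     (fst a = 0 \<and> ell q (Suc k) < snd a \<and> snd a < ell q k \<and> b = (spos q k, snd a)))"

text \<open>A saddle connection starting at the singular point p (a vertex of P) in direction v:
  a finite chain of straight segments [a_i, b_i], b_i = a_i + t_i v with t_i > 0, whose
  relative interiors lie in the interior of P (hence contain no singular point), where each
  non-final endpoint b_i is a non-vertex boundary point glued to the next starting point a_(i+1),
  and the final endpoint b_n is a vertex, i.e. the singularity.\<close>
definition saddle_connection_from :: "nat \<Rightarrow> real \<times> real \<Rightarrow> real \<times> real \<Rightarrow> bool" where
  "saddle_connection_from q p v \<longleftrightarrow> p \<in> vertices q \<and>
     (\<exists>(n::nat) (a::nat \<Rightarrow> real \<times> real) (b::nat \<Rightarrow> real \<times> real) (t::nat \<Rightarrow> real).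
        a 0 = p \<and>
        (\<forall>i\<le>n. 0 < t i \<and> b i = a i + t i *\<^sub>R v \<and> a i \<in> polyP q \<and> b i \<in> polyP q \<and>
                 open_segment (a i) (b i) \<subseteq> interior (polyP q)) \<and>
        (\<forall>i<n. glued q (b i) (a (Suc i))) \<and>
        b n \<in> vertices q)"

end

theory Submission
  imports Defs
begin

(* Follow the trajectory of slope q/(2q-1) from the lower right corner (1 + 1/q, 0) of square 2.
   It crosses square 3 and enters square 1 through the left edge at height 1/(q(2q-1)).
   From height j/(q(2q-1)) on the left edge (1 <= j <= q-1), one lap crosses square 1 from the
   left to the right edge, then from the left edge to the top edge, re-enters at the bottom of
   square 1 and leaves square 2 through its top edge at x = 1 + (q-1-j)/q^2.  For j < q-1 it then
   crosses square 2 and returns to the left edge at height (j+1)/(q(2q-1)); for j = q-1 the exit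
   point is the vertex (1, 1/q), i.e. the singularity.  Every piece is the diagonal of a closed
   rectangle contained in P, so its relative interior lies in the interior of P. *)

lemma ell_Suc: "ell q (Suc k) = 1 / real q ^ k"
  by (simp add: ell_def)

lemma spos_0: "spos q 0 = 0"
  by (simp add: spos_def)

lemma spos_Suc: "spos q (Suc k) = spos q k + ell q (Suc k)"
  by (simp add: spos_def)

lemma square_subset_polyP: "1 \<le> k \<Longrightarrow> square q k \<subseteq> polyP q"
  by (auto simp: polyP_def)

lemma rectangle_subset_polyP:
  assumes "1 \<le> k" "spos q (k - 1) \<le> x0" "x1 \<le> spos q k" "0 \<le> y0" "y1 \<le> ell q k"
  shows "{x0..x1} \<times> {y0..y1} \<subseteq> polyP q"
proof -
  have "{x0..x1} \<times> {y0..y1} \<subseteq> square q k"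
    using assms(2-) by (auto simp: square_def)
  then show ?thesis using square_subset_polyP[OF assms(1)] by blast
qed

lemma rectangle_subset_polyP_two_squares:
  assumes "1 \<le> q" "1 \<le> k" "spos q (k - 1) \<le> x0" "x1 \<le> spos q (Suc k)" "0 \<le> y0" "y1 \<le> ell q (Suc k)"
  shows "{x0..x1} \<times> {y0..y1} \<subseteq> polyP q"
proof
  fix p assume p: "p \<in> {x0..x1} \<times> {y0..y1}"
  have "ell q (Suc k) \<le> ell q k"
    using assms(1,2) by (cases k) (auto simp: ell_Suc divide_simps)
  show "p \<in> polyP q"
  proof (cases "fst p \<le> spos q k")
    case True
    then have "p \<in> square q k"
      using p assms \<open>ell q (Suc k) \<le> ell q k\<close> by (auto simp: square_def mem_Times_iff)
    then show ?thesis using square_subset_polyP[OF assms(2)] by blast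
  next
    case False
    then have "p \<in> square q (Suc k)"
      using p assms by (auto simp: square_def mem_Times_iff)
    then show ?thesis using square_subset_polyP[of "Suc k" q] by auto
  qed
qed

lemma lower_right_vertex: "1 \<le> k \<Longrightarrow> x = spos q k \<Longrightarrow> (x, 0) \<in> vertices q"
  by (auto simp: vertices_def)

lemma right_edge_vertex:
  "1 \<le> k \<Longrightarrow> x = spos q k \<Longrightarrow> y = ell q (Suc k) \<Longrightarrow> (x, y) \<in> vertices q"
  by (auto simp: vertices_def)

lemma glued_top_bottom:
  "1 \<le> k \<Longrightarrow> y = ell q k \<Longrightarrow> spos q (k - 1) < x \<Longrightarrow> x < spos q k \<Longrightarrow> glued q (x, y) (x, 0)"
  by (auto simp: glued_def)

lemma glued_right_left:
  "1 \<le> k \<Longrightarrow> x = spos q k \<Longrightarrow> ell q (Suc k) < y \<Longrightarrow> y < ell q k \<Longrightarrow> glued q (x, y) (0, y)"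
  by (auto simp: glued_def)

definition flow_segment :: "nat \<Rightarrow> real \<times> real \<Rightarrow> real \<times> real \<Rightarrow> real \<times> real \<Rightarrow> bool" where
  "flow_segment q v a b \<longleftrightarrow> (\<exists>t>0. b = a + t *\<^sub>R v) \<and> a \<in> polyP q \<and> b \<in> polyP q \<and>
     open_segment a b \<subseteq> interior (polyP q)"

inductive flow_path :: "nat \<Rightarrow> real \<times> real \<Rightarrow> real \<times> real \<Rightarrow> real \<times> real \<Rightarrow> bool"
  for q v where
  single: "flow_segment q v a b \<Longrightarrow> flow_path q v a b"
| glue: "flow_segment q v a b \<Longrightarrow> glued q b a' \<Longrightarrow> flow_path q v a' c \<Longrightarrow> flow_path q v a c"

lemma flow_path_trans:
  assumes "flow_path q v a b" "glued q b a'" "flow_path q v a' c"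
  shows "flow_path q v a c"
  using assms by induction (auto intro: flow_path.glue)

lemma flow_path_imp_segment_chain:
  assumes "flow_path q v p c"
  shows "\<exists>n a b. a 0 = p \<and> (\<forall>i\<le>n. flow_segment q v (a i) (b i)) \<and>
    (\<forall>i<n. glued q (b i) (a (Suc i))) \<and> b n = c"
  using assms
proof induction
  case (single a b)
  then show ?case by (intro exI[of _ 0] exI[of _ "\<lambda>_. a"] exI[of _ "\<lambda>_. b"]) auto
next
  case (glue a b a' c)
  from glue.IH obtain n as bs where chain: "as 0 = a'" "\<forall>i\<le>n. flow_segment q v (as i) (bs i)"
    "\<forall>i<n. glued q (bs i) (as (Suc i))" "bs n = c"
    by blast
  show ?case
  proof (intro exI conjI allI impI)
    fix i assume "i \<le> Suc n"
    then show "flow_segment q v (case_nat a as i) (case_nat b bs i)"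
      using chain(2) glue.hyps(1) by (cases i) auto
  next
    fix i assume "i < Suc n"
    then show "glued q (case_nat b bs i) (case_nat a as (Suc i))"
      using chain(1,3) glue.hyps(2) by (cases i) auto
  qed (use chain(4) in simp_all)
qed

lemma saddle_connection_fromI:
  assumes "p \<in> vertices q" "flow_path q v p c" "c \<in> vertices q"
  shows "saddle_connection_from q p v"
proof -
  obtain n a b where chain: "a 0 = p" "\<forall>i\<le>n. flow_segment q v (a i) (b i)"
    "\<forall>i<n. glued q (b i) (a (Suc i))" "b n = c"
    using flow_path_imp_segment_chain[OF assms(2)] by blast
  then have "\<forall>i\<le>n. \<exists>t>0. b i = a i + t *\<^sub>R v" by (simp add: flow_segment_def)
  then obtain t where t: "\<forall>i\<le>n. 0 < t i \<and> b i = a i + t i *\<^sub>R v" by metis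
  have "\<forall>i\<le>n. 0 < t i \<and> b i = a i + t i *\<^sub>R v \<and> a i \<in> polyP q \<and> b i \<in> polyP q \<and>
      open_segment (a i) (b i) \<subseteq> interior (polyP q)"
    using t chain(2) by (simp add: flow_segment_def)
  then show ?thesis
    unfolding saddle_connection_from_def using assms(1,3) chain(1,3,4) by blast
qed

lemma open_segment_subset_open_rectangle:
  fixes a b :: "real \<times> real"
  assumes "fst a < fst b" "snd a < snd b"
  shows "open_segment a b \<subseteq> {fst a<..<fst b} \<times> {snd a<..<snd b}"
proof
  fix z assume "z \<in> open_segment a b"
  then obtain u where u: "0 < u" "u < 1" and z: "z = a + u *\<^sub>R (b - a)"
    by (auto simp: in_segment algebra_simps)
  have "0 < u * (fst b - fst a)" "u * (fst b - fst a) < fst b - fst a"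
       "0 < u * (snd b - snd a)" "u * (snd b - snd a) < snd b - snd a"
    using u assms by auto
  then show "z \<in> {fst a<..<fst b} \<times> {snd a<..<snd b}"
    by (simp add: z mem_Times_iff)
qed

lemma flow_segmentI:
  assumes rect: "{x0..x1} \<times> {y0..y1} \<subseteq> polyP q"
    and "x0 < x1" and v: "0 < v1" "0 < v2"
    and slope: "(y1 - y0) * v1 = (x1 - x0) * v2"
  shows "flow_segment q (v1, v2) (x0, y0) (x1, y1)"
proof -
  define t where "t = (x1 - x0) / v1"
  have "0 < t" using v \<open>x0 < x1\<close> by (simp add: t_def)
  have "y1 - y0 = t * v2" using slope v by (simp add: t_def field_simps)
  then have "y0 < y1" using \<open>0 < t\<close> v by (metis diff_gt_0_iff_gt mult_pos_pos)
  have "(x1, y1) = (x0, y0) + t *\<^sub>R (v1, v2)"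
    using v \<open>y1 - y0 = t * v2\<close> by (simp add: t_def)
  have "open_segment (x0, y0) (x1, y1) \<subseteq> {x0<..<x1} \<times> {y0<..<y1}"
    using open_segment_subset_open_rectangle[of "(x0, y0)" "(x1, y1)"] \<open>x0 < x1\<close> \<open>y0 < y1\<close> by simp
  also have "\<dots> \<subseteq> interior (polyP q)"
    using rect by (intro interior_maximal) (auto simp: open_Times)
  finally show ?thesis
    unfolding flow_segment_def using \<open>0 < t\<close> \<open>(x1, y1) = (x0, y0) + t *\<^sub>R (v1, v2)\<close>
      \<open>x0 < x1\<close> \<open>y0 < y1\<close> rect by auto
qed

lemmas polygon_coordinates = numeral_eq_Suc spos_0 spos_Suc ell_Suc

context
  fixes q :: nat
  assumes two_le_q: "2 \<le> q"
begin

abbreviation trajectory_direction :: "real \<times> real" where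
  "trajectory_direction \<equiv> (2 * real q - 1, real q)"

abbreviation edge_height :: "real \<Rightarrow> real" where
  "edge_height y \<equiv> y / (real q * (2 * real q - 1))"

lemma real_q_bounds:
  "2 \<le> real q" "0 < 2 * real q - 1"
  "2 * real q \<le> real q * real q" "2 * (real q * real q) \<le> real q * (real q * real q)"
proof -
  show "2 \<le> real q" "0 < 2 * real q - 1" using two_le_q by auto
  show "2 * real q \<le> real q * real q" "2 * (real q * real q) \<le> real q * (real q * real q)"
    using two_le_q by (intro mult_right_mono; simp)+
qed

lemma segment_square3_corner_right:
  "flow_segment q trajectory_direction (1 + 1 / real q, 0) (1 + 1 / real q + 1 / (real q)\<^sup>2, edge_height 1)"
  by (rule flow_segmentI, rule rectangle_subset_polyP[of 3])
    (use real_q_bounds in \<open>auto simp: polygon_coordinates field_simps power2_eq_square\<close>)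

lemma glued_square3_right: "glued q (1 + 1 / real q + 1 / (real q)\<^sup>2, edge_height 1) (0, edge_height 1)"
  by (rule glued_right_left[of 3])
    (use real_q_bounds in \<open>auto simp: polygon_coordinates field_simps power2_eq_square\<close>,
     use real_q_bounds in linarith)

context
  fixes j :: real
  assumes j: "1 \<le> j" "j \<le> real q - 1"
begin

(* The products are the monomials that remain after clearing denominators below;
   linarith treats them as atoms. *)
lemma j_bounds: "real q \<le> j * real q" "real q * real q \<le> j * (real q * real q)"
  "j * real q \<le> real q * real q - real q"
proof -
  show "real q \<le> j * real q" "real q * real q \<le> j * (real q * real q)"
    using j by (simp_all add: mult_le_cancel_right1)
  have "j * real q \<le> (real q - 1) * real q" using j by (intro mult_right_mono) auto
  then show "j * real q \<le> real q * real q - real q" by (simp add: algebra_simps)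
qed

lemma segment_square1_left_right:
  "flow_segment q trajectory_direction (0, edge_height j) (1, edge_height (j + (real q)\<^sup>2))"
proof (rule flow_segmentI)
  show "{0..1} \<times> {edge_height j..edge_height (j + (real q)\<^sup>2)} \<subseteq> polyP q"
    by (rule rectangle_subset_polyP[of 1])
      (use real_q_bounds j in \<open>auto simp: polygon_coordinates field_simps power2_eq_square\<close>,
       use real_q_bounds j_bounds j in linarith)
  show "(edge_height (j + (real q)\<^sup>2) - edge_height j) * (2 * real q - 1) = (1 - 0) * real q"
    using real_q_bounds by (simp add: diff_divide_distrib[symmetric] power2_eq_square)
qed (use real_q_bounds in auto)

lemma glued_square1_right:
  "glued q (1, edge_height (j + (real q)\<^sup>2)) (0, edge_height (j + (real q)\<^sup>2))"
  by (rule glued_right_left[of 1])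
    (use real_q_bounds j in \<open>auto simp: polygon_coordinates field_simps power2_eq_square\<close>,
     (use real_q_bounds j_bounds j in linarith)+)

lemma segment_square1_left_top:
  "flow_segment q trajectory_direction (0, edge_height (j + (real q)\<^sup>2)) (((real q)\<^sup>2 - real q - j) / (real q)\<^sup>2, 1)"
  by (rule flow_segmentI, rule rectangle_subset_polyP[of 1])
    (use real_q_bounds j in \<open>auto simp: polygon_coordinates field_simps power2_eq_square\<close>,
     (use real_q_bounds j_bounds j in linarith)+)

lemma glued_square1_top:
  "glued q (((real q)\<^sup>2 - real q - j) / (real q)\<^sup>2, 1) (((real q)\<^sup>2 - real q - j) / (real q)\<^sup>2, 0)"
  by (rule glued_top_bottom[of 1])
    (use real_q_bounds j in \<open>auto simp: polygon_coordinates field_simps power2_eq_square\<close>,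
     (use real_q_bounds j_bounds j in linarith)+)

lemma segment_squares12_bottom_top:
  "flow_segment q trajectory_direction (((real q)\<^sup>2 - real q - j) / (real q)\<^sup>2, 0)
     (1 + (real q - 1 - j) / (real q)\<^sup>2, 1 / real q)"
  by (rule flow_segmentI, rule rectangle_subset_polyP_two_squares[of q 1])
    (use real_q_bounds j in \<open>auto simp: polygon_coordinates field_simps power2_eq_square\<close>,
     (use real_q_bounds j_bounds j in linarith)+)

lemma glued_square2_top:
  assumes "j < real q - 1"
  shows "glued q (1 + (real q - 1 - j) / (real q)\<^sup>2, 1 / real q) (1 + (real q - 1 - j) / (real q)\<^sup>2, 0)"
  by (rule glued_top_bottom[of 2])
    (use real_q_bounds j assms in \<open>auto simp: polygon_coordinates field_simps power2_eq_square\<close>,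
     (use real_q_bounds j_bounds j in linarith)+)

lemma segment_square2_bottom_right:
  "flow_segment q trajectory_direction (1 + (real q - 1 - j) / (real q)\<^sup>2, 0) (1 + 1 / real q, edge_height (j + 1))"
  by (rule flow_segmentI, rule rectangle_subset_polyP[of 2])
    (use real_q_bounds j in \<open>auto simp: polygon_coordinates field_simps power2_eq_square\<close>,
     (use real_q_bounds j_bounds j in linarith)+)

lemma glued_square2_right: "glued q (1 + 1 / real q, edge_height (j + 1)) (0, edge_height (j + 1))"
  by (rule glued_right_left[of 2])
    (use real_q_bounds j in \<open>auto simp: polygon_coordinates field_simps power2_eq_square\<close>,
     (use real_q_bounds j_bounds j in linarith)+)

lemma flow_path_left_edge_to_square2_top:
  "flow_path q trajectory_direction (0, edge_height j) (1 + (real q - 1 - j) / (real q)\<^sup>2, 1 / real q)"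
  using segment_square1_left_right glued_square1_right segment_square1_left_top glued_square1_top
    segment_squares12_bottom_top
  by (blast intro: flow_path.intros)

end

lemma flow_path_from_left_edge:
  assumes "1 \<le> j" "j \<le> q - 1"
  shows "flow_path q trajectory_direction (0, edge_height (real j)) (1, 1 / real q)"
  using assms(2,1)
proof (induction rule: inc_induct)
  case base
  have "real (q - 1) = real q - 1" using two_le_q by simp
  then show ?case
    using flow_path_left_edge_to_square2_top[of "real (q - 1)"] base by simp
next
  case (step j)
  have j: "1 \<le> real j" "real j < real q - 1" using step by linarith+
  have "flow_path q trajectory_direction (0, edge_height (real j + 1)) (1, 1 / real q)"
    using step.IH step.prems by (simp add: add.commute)
  then have "flow_path q trajectory_direction (1 + (real q - 1 - real j) / (real q)\<^sup>2, 0) (1, 1 / real q)"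
    using j by (intro flow_path.glue[OF segment_square2_bottom_right glued_square2_right]) auto
  then show ?case
    using flow_path_trans[OF flow_path_left_edge_to_square2_top glued_square2_top] j by simp
qed

end

theorem lemma3p1:
  fixes q :: nat
  assumes "q \<ge> 2"
  shows "saddle_connection_from q (1 + 1 / real q, 0) (2 * real q - 1, real q)"
proof (rule saddle_connection_fromI)
  show "(1 + 1 / real q, 0) \<in> vertices q"
    by (rule lower_right_vertex[of 2]) (simp_all add: polygon_coordinates)
  show "(1, 1 / real q) \<in> vertices q"
    by (rule right_edge_vertex[of 1]) (simp_all add: polygon_coordinates)
  have "flow_path q (2 * real q - 1, real q) (0, 1 / (real q * (2 * real q - 1))) (1, 1 / real q)"
    using flow_path_from_left_edge[of q 1] assms by simp
  then show "flow_path q (2 * real q - 1, real q) (1 + 1 / real q, 0) (1, 1 / real q)"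
    using segment_square3_corner_right glued_square3_right assms by (blast intro: flow_path.glue)
qed

end
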